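(* Let $k$ be a positive integer, let $D$ be a digraph containing no subdivision of $B(k,1;k)$, and let $\mathcal{C}$ be a $k$-suitable collection of directed cycles of $D$. Let $C_1,C_2,C_3\in\mathcal{C}$ be distinct and pairwise intersecting, and let $v\in (V(C_2)\cap V(C_3))\setminus V(C_1)$. Then exactly one of the following holds: (i) $C_2[t_{1,2},v]$ and $C_3[t_{1,3},v]$ both have length less than $3k$; (ii) $C_2[v,s_{1,2}]$ and $C_3[v,s_{1,3}]$ both have length less than $3k$.
   Context: A collection $\mathcal{C}$ of directed cycles is $k$-suitable if every cycle of $\mathcal{C}$ has length at least $8k$ and for any two distinct $C_i,C_j\in\mathcal{C}$, the set $V(C_i)\cap V(C_j)$ is either empty or the vertex set of a directed path $P_{i,j}$ with at most $k$ vertices which is a subpath of both $C_i$ and $C_j$; $s_{i,j}$ and $t_{i,j}$ denote the initial and terminal vertices of $P_{i,j}$. For a directed cycle $C$ and vertices $a,b$ on it, $C[a,b]$ is the directed subpath of $C$ from $a$ to $b$. Length = number of arcs. A digraph contains a subdivision of $B(k_1,k_2;k_3)$ if there exist distinct vertices $u,w$ and three pairwise internally vertex-disjoint directed paths: two from $u$ to $w$ of lengths at least $k_1$ and $k_2$, and one from $w$ to $u$ of length at least $k_3$. *)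

theory Defs
  imports Main
begin

definition digraph :: "'a set \<Rightarrow> ('a \<times> 'a) set \<Rightarrow> bool" where
  "digraph V E \<longleftrightarrow> finite V \<and> E \<subseteq> V \<times> V \<and> (\<forall>x. (x, x) \<notin> E)"

definition dpath :: "('a \<times> 'a) set \<Rightarrow> 'a list \<Rightarrow> bool" where
  "dpath E p \<longleftrightarrow> p \<noteq> [] \<and> distinct p \<and> (\<forall>i. Suc i < length p \<longrightarrow> (p ! i, p ! Suc i) \<in> E)"

definition plen :: "'a list \<Rightarrow> nat" where
  "plen p = length p - 1"

definition dcycle :: "'a set \<Rightarrow> ('a \<times> 'a) set \<Rightarrow> 'a list \<Rightarrow> bool" where
  "dcycle V E c \<longleftrightarrow> length c \<ge> 2 \<and> distinct c \<and> set c \<subseteq> V \<and>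
     (\<forall>i < length c. (c ! i, c ! ((i + 1) mod length c)) \<in> E)"

definition cidx :: "'a list \<Rightarrow> 'a \<Rightarrow> nat" where
  "cidx c a = (THE i. i < length c \<and> c ! i = a)"

text \<open>Length (number of arcs) of the subpath C[a,b] of the cycle c from a to b.\<close>
definition clen :: "'a list \<Rightarrow> 'a \<Rightarrow> 'a \<Rightarrow> nat" where
  "clen c a b = (cidx c b + length c - cidx c a) mod length c"

definition csubpath :: "'a list \<Rightarrow> 'a list \<Rightarrow> bool" where
  "csubpath c p \<longleftrightarrow> p \<noteq> [] \<and> distinct p \<and> set p \<subseteq> set c \<and>
     (\<forall>i. Suc i < length p \<longrightarrow> clen c (p ! i) (p ! Suc i) = 1)"

definition k_suitable :: "'a set \<Rightarrow> ('a \<times> 'a) set \<Rightarrow> nat \<Rightarrow> 'a list set \<Rightarrow> bool" where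
  "k_suitable V E k CC \<longleftrightarrow>
     (\<forall>C \<in> CC. dcycle V E C \<and> length C \<ge> 8 * k) \<and>
     (\<forall>Ci \<in> CC. \<forall>Cj \<in> CC. Ci \<noteq> Cj \<longrightarrow>
        set Ci \<inter> set Cj = {} \<or>
        (\<exists>P. csubpath Ci P \<and> csubpath Cj P \<and> set P = set Ci \<inter> set Cj \<and> length P \<le> k))"

definition has_B_subdivision :: "('a \<times> 'a) set \<Rightarrow> nat \<Rightarrow> nat \<Rightarrow> nat \<Rightarrow> bool" where
  "has_B_subdivision E k1 k2 k3 \<longleftrightarrow>
     (\<exists>u w P1 P2 P3. u \<noteq> w \<and> dpath E P1 \<and> dpath E P2 \<and> dpath E P3 \<and> P1 \<noteq> P2 \<and>
        hd P1 = u \<and> last P1 = w \<and> hd P2 = u \<and> last P2 = w \<and> hd P3 = w \<and> last P3 = u \<and>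
        plen P1 \<ge> k1 \<and> plen P2 \<ge> k2 \<and> plen P3 \<ge> k3 \<and>
        set P1 \<inter> set P2 \<subseteq> {u, w} \<and> set P1 \<inter> set P3 \<subseteq> {u, w} \<and> set P2 \<inter> set P3 \<subseteq> {u, w})"

end

theory Submission
  imports Defs
begin

text \<open>The arcs
  C2[t12,v] and C2[v,s12] together with P12 cover C2, which has length at least 8k, so they are
  not both shorter than 3k. If some vertex z lies on all three cycles, then z and v both lie on
  P23, which is shorter than k, and in C2 as well as in C3 the piece of P23 between them leaves
  P12 at t12 (if z comes first) or enters it at s12 (if v comes first). Otherwise
  C1[t12,s13] followed by C3[s13,s23] leaves C2 at t12 and returns at s23; together with the two
  arcs of C2 between these vertices it would be a subdivision of B(k,1;k) unless C2[s23,t12] or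
  both C2[t12,s23] and the ear itself are shorter than k. Either alternative, combined with the
  same construction for C3, gives the bound.\<close>

lemma cidx_nth: "distinct c \<Longrightarrow> i < length c \<Longrightarrow> cidx c (c ! i) = i"
  unfolding cidx_def by (rule the_equality) (auto simp: nth_eq_iff_index_eq)

lemma cidx_less_nth_cidx:
  assumes "distinct c" "a \<in> set c"
  shows "cidx c a < length c" "c ! cidx c a = a"
proof -
  obtain i where "i < length c" "c ! i = a" using assms(2) by (auto simp: in_set_conv_nth)
  with cidx_nth[OF assms(1)] show "cidx c a < length c" "c ! cidx c a = a" by auto
qed

lemma clen_less: "a \<in> set c \<Longrightarrow> clen c a b < length c"
  unfolding clen_def by (cases c) auto

lemma clen_self [simp]: "clen c a a = 0"
  unfolding clen_def by simp

lemma clen_add_mod: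
  assumes "distinct c" "a \<in> set c" "b \<in> set c" "x \<in> set c"
  shows "clen c a x = (clen c a b + clen c b x) mod length c"
proof -
  define n where "n = length c"
  have "cidx c a < n" "cidx c b < n" "cidx c x < n"
    using cidx_less_nth_cidx(1)[OF assms(1)] assms(2-) n_def by auto
  then have "(cidx c b + n - cidx c a) + (cidx c x + n - cidx c b) = (cidx c x + n - cidx c a) + n"
    by simp
  then have "((cidx c b + n - cidx c a) mod n + (cidx c x + n - cidx c b) mod n) mod n
      = (cidx c x + n - cidx c a) mod n"
    by (metis mod_add_eq mod_add_self2)
  then show ?thesis
    unfolding clen_def n_def by (rule sym)
qed

lemma clen_eq_0_iff:
  assumes "distinct c" "a \<in> set c" "b \<in> set c"
  shows "clen c a b = 0 \<longleftrightarrow> a = b"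
proof
  define n where "n = length c"
  assume "clen c a b = 0"
  then have mod0: "(cidx c b + n - cidx c a) mod n = 0"
    unfolding clen_def n_def .
  have i: "cidx c a < n" "cidx c b < n"
    using cidx_less_nth_cidx(1)[OF assms(1)] assms(2-) n_def by auto
  have "cidx c b = cidx c a"
  proof (cases "cidx c a \<le> cidx c b")
    case True
    then have "cidx c b + n - cidx c a = (cidx c b - cidx c a) + n" by simp
    with mod0 have "(cidx c b - cidx c a) mod n = 0"
      by (simp only: mod_add_self2)
    with True i show ?thesis by simp
  next
    case False
    with mod0 i show ?thesis by simp
  qed
  then show "a = b" using cidx_less_nth_cidx assms by metis
qed simp

lemma clen_split:
  assumes "distinct c" "a \<in> set c" "b \<in> set c" "x \<in> set c" "clen c a b \<le> clen c a x"
  shows "clen c a x = clen c a b + clen c b x"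
proof (rule ccontr)
  let ?u = "clen c a b" and ?w = "clen c b x" and ?n = "length c"
  assume "clen c a x \<noteq> ?u + ?w"
  then have "\<not> ?u + ?w < ?n"
    using clen_add_mod[OF assms(1-4)] by auto
  moreover have "?u < ?n" "?w < ?n"
    by (simp_all add: clen_less assms(2,3))
  ultimately have "clen c a x = ?u + ?w - ?n"
    using clen_add_mod[OF assms(1-4)] by (simp add: le_mod_geq)
  with \<open>?w < ?n\<close> \<open>\<not> ?u + ?w < ?n\<close> assms(5) show False by linarith
qed

lemma clen_cycle:
  assumes "distinct c" "a \<in> set c" "b \<in> set c" "a \<noteq> b"
  shows "clen c a b + clen c b a = length c"
proof -
  let ?u = "clen c a b" and ?w = "clen c b a" and ?n = "length c"
  have "?u \<noteq> 0"
    using clen_eq_0_iff[OF assms(1-3)] assms(4) by simp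
  have "?u < ?n" "?w < ?n"
    by (simp_all add: clen_less assms(2,3))
  have mod0: "(?u + ?w) mod ?n = 0"
    using clen_add_mod[OF assms(1,2,3,2)] by simp
  have "\<not> ?u + ?w < ?n"
  proof
    assume "?u + ?w < ?n"
    then have "(?u + ?w) mod ?n = ?u + ?w" by (rule mod_less)
    with mod0 \<open>?u \<noteq> 0\<close> show False by simp
  qed
  then have "(?u + ?w - ?n) mod ?n = 0"
    using mod0 le_mod_geq[of ?n "?u + ?w"] by simp
  moreover have "(?u + ?w - ?n) mod ?n = ?u + ?w - ?n"
    using \<open>?u < ?n\<close> \<open>?w < ?n\<close> by (intro mod_less) linarith
  ultimately show ?thesis
    using \<open>\<not> ?u + ?w < ?n\<close> by linarith
qed

lemma clen_inj:
  assumes "distinct c" "a \<in> set c" "x \<in> set c" "y \<in> set c" "clen c a x = clen c a y"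
  shows "x = y"
  using clen_split[OF assms(1-4)] clen_eq_0_iff[OF assms(1,3,4)] assms(5) by simp

lemma plen_less_length: "xs \<noteq> [] \<Longrightarrow> plen xs < length xs"
  by (simp add: plen_def)

definition arc :: "'a list \<Rightarrow> 'a \<Rightarrow> 'a \<Rightarrow> 'a list" where
  "arc c a b = map (\<lambda>j. c ! ((cidx c a + j) mod length c)) [0..<Suc (clen c a b)]"

lemma length_arc [simp]: "length (arc c a b) = Suc (clen c a b)"
  by (simp add: arc_def)

lemma arc_not_Nil [simp]: "arc c a b \<noteq> []"
  by (simp add: arc_def)

lemma plen_arc [simp]: "plen (arc c a b) = clen c a b"
  by (simp add: arc_def plen_def)

lemma nth_arc: "j \<le> clen c a b \<Longrightarrow> arc c a b ! j = c ! ((cidx c a + j) mod length c)"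
  unfolding arc_def by (simp del: upt_Suc)

lemma clen_shift:
  assumes "distinct c" "a \<in> set c"
  shows "clen c a (c ! ((cidx c a + j) mod length c)) = j mod length c"
proof -
  let ?n = "length c" and ?i = "cidx c a"
  have "?n > 0" using assms(2) by auto
  have "?i < ?n" using cidx_less_nth_cidx(1)[OF assms] .
  have "clen c a (c ! ((?i + j) mod ?n)) = ((?i + j) mod ?n + ?n - ?i) mod ?n"
    unfolding clen_def using cidx_nth[OF assms(1)] \<open>?n > 0\<close> by simp
  also have "\<dots> = ((?i + j) mod ?n + (?n - ?i)) mod ?n"
    using \<open>?i < ?n\<close> by simp
  also have "\<dots> = ((?i + j) + (?n - ?i)) mod ?n"
    by (simp add: mod_add_left_eq)
  also have "(?i + j) + (?n - ?i) = j + ?n"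
    using \<open>?i < ?n\<close> by simp
  finally show ?thesis by simp
qed

lemma nth_cidx_add_clen:
  assumes "distinct c" "a \<in> set c" "x \<in> set c"
  shows "c ! ((cidx c a + clen c a x) mod length c) = x"
proof (rule clen_inj[OF assms(1,2) _ assms(3)])
  have "length c > 0" using assms(2) by auto
  then show "c ! ((cidx c a + clen c a x) mod length c) \<in> set c"
    by simp
  show "clen c a (c ! ((cidx c a + clen c a x) mod length c)) = clen c a x"
    using clen_shift[OF assms(1,2)] clen_less[OF assms(2)] by simp
qed

lemma clen_nth_arc:
  assumes "distinct c" "a \<in> set c" "j \<le> clen c a b"
  shows "clen c a (arc c a b ! j) = j"
  using clen_shift[OF assms(1,2)] clen_less[OF assms(2), of b] assms(3) by (simp add: nth_arc)

lemma hd_arc: "distinct c \<Longrightarrow> a \<in> set c \<Longrightarrow> hd (arc c a b) = a"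
  using nth_cidx_add_clen[of c a a] by (simp add: arc_def hd_map del: upt_Suc)

lemma last_arc:
  assumes "distinct c" "a \<in> set c" "b \<in> set c"
  shows "last (arc c a b) = b"
proof -
  have "last (arc c a b) = arc c a b ! clen c a b"
    by (simp add: last_conv_nth)
  then show ?thesis using nth_cidx_add_clen[OF assms] by (simp add: nth_arc)
qed

lemma set_arc:
  assumes "distinct c" "a \<in> set c"
  shows "set (arc c a b) = {x \<in> set c. clen c a x \<le> clen c a b}"
proof (intro equalityI subsetI)
  fix x assume "x \<in> set (arc c a b)"
  then obtain j where j: "j \<le> clen c a b" "x = arc c a b ! j"
    by (metis in_set_conv_nth length_arc less_Suc_eq_le)
  moreover have "(cidx c a + j) mod length c < length c"
    using length_pos_if_in_set[OF assms(2)] by simp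
  ultimately show "x \<in> {x \<in> set c. clen c a x \<le> clen c a b}"
    using clen_nth_arc[OF assms j(1)] by (simp add: nth_arc)
next
  fix x assume "x \<in> {x \<in> set c. clen c a x \<le> clen c a b}"
  then have "arc c a b ! clen c a x = x" "clen c a x < length (arc c a b)"
    using nth_cidx_add_clen[OF assms] by (auto simp: nth_arc)
  then show "x \<in> set (arc c a b)" by (metis nth_mem)
qed

lemma distinct_arc:
  assumes "distinct c" "a \<in> set c"
  shows "distinct (arc c a b)"
proof (rule distinct_conv_nth[THEN iffD2], intro allI impI)
  fix i j assume "i < length (arc c a b)" "j < length (arc c a b)" "i \<noteq> j"
  then have "clen c a (arc c a b ! i) \<noteq> clen c a (arc c a b ! j)"
    using clen_nth_arc[OF assms] by simp
  then show "arc c a b ! i \<noteq> arc c a b ! j" by metis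
qed

lemma nth_clen_arc:
  assumes "distinct c" "a \<in> set c" "x \<in> set (arc c a b)"
  shows "arc c a b ! clen c a x = x"
  using assms nth_cidx_add_clen[OF assms(1,2)] set_arc[OF assms(1,2)] by (simp add: nth_arc)

lemma clen_eq_if_arc_eq:
  assumes "distinct c" "distinct c'" "a \<in> set c" "a \<in> set c'"
    and "arc c a b = arc c' a b'" "x \<in> set (arc c a b)"
  shows "clen c a x = clen c' a x"
proof -
  let ?P = "arc c a b"
  have "x \<in> set (arc c' a b')" using assms(5,6) by simp
  have "?P ! clen c a x = x" "clen c a x < length ?P"
    using nth_clen_arc[OF assms(1,3,6)] assms(6) set_arc[OF assms(1,3)] by (auto simp: less_Suc_eq_le)
  moreover have "?P ! clen c' a x = x" "clen c' a x < length ?P"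
    unfolding assms(5)
    using nth_clen_arc[OF assms(2,4) \<open>x \<in> set (arc c' a b')\<close>] \<open>x \<in> set (arc c' a b')\<close>
      set_arc[OF assms(2,4)] by (auto simp: less_Suc_eq_le)
  ultimately show ?thesis
    using nth_eq_iff_index_eq[OF distinct_arc[OF assms(1,3)]] by metis
qed

lemma dpath_arc:
  assumes "dcycle V E c" "a \<in> set c"
  shows "dpath E (arc c a b)"
proof -
  have "distinct c" using assms(1) by (simp add: dcycle_def)
  have "(arc c a b ! i, arc c a b ! Suc i) \<in> E" if "i < clen c a b" for i
  proof -
    let ?r = "(cidx c a + i) mod length c"
    have "?r < length c" using length_pos_if_in_set[OF assms(2)] by simp
    with assms(1) have "(c ! ?r, c ! ((?r + 1) mod length c)) \<in> E"
      unfolding dcycle_def by blast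
    moreover have "(?r + 1) mod length c = (cidx c a + Suc i) mod length c"
      by (simp add: mod_Suc_eq)
    ultimately show ?thesis using that by (simp add: nth_arc)
  qed
  then show ?thesis
    using distinct_arc[OF \<open>distinct c\<close> assms(2)] by (auto simp: dpath_def arc_def)
qed

lemma csubpath_eq_arc:
  assumes "distinct c" "csubpath c P" "length P \<le> length c"
  shows "P = arc c (hd P) (last P)"
proof -
  have "P \<noteq> []" "set P \<subseteq> set c" using assms(2) by (auto simp: csubpath_def)
  then have "hd P \<in> set c" by auto
  have clen_nth: "clen c (hd P) (P ! i) = i" if "i < length P" for i
    using that
  proof (induction i)
    case 0
    with \<open>P \<noteq> []\<close> show ?case by (simp add: hd_conv_nth)
  next
    case (Suc i)
    have "P ! i \<in> set c" "P ! Suc i \<in> set c"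
      using Suc.prems \<open>set P \<subseteq> set c\<close> by (auto dest: nth_mem)
    moreover have "clen c (hd P) (P ! i) = i"
      using Suc by simp
    ultimately have "clen c (hd P) (P ! Suc i) = (i + clen c (P ! i) (P ! Suc i)) mod length c"
      using clen_add_mod[OF assms(1) \<open>hd P \<in> set c\<close>] by metis
    also have "\<dots> = Suc i"
      using assms(2,3) Suc.prems by (simp add: csubpath_def)
    finally show ?case .
  qed
  have "clen c (hd P) (last P) = length P - 1"
    using clen_nth[of "length P - 1"] \<open>P \<noteq> []\<close> by (simp add: last_conv_nth)
  then have "length (arc c (hd P) (last P)) = length P"
    using \<open>P \<noteq> []\<close> by simp
  moreover have "P ! i = arc c (hd P) (last P) ! i" if "i < length P" for i
  proof (rule clen_inj[OF assms(1) \<open>hd P \<in> set c\<close>])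
    show "P ! i \<in> set c" using that \<open>set P \<subseteq> set c\<close> by (auto dest: nth_mem)
    show "arc c (hd P) (last P) ! i \<in> set c"
      using that \<open>length (arc c (hd P) (last P)) = length P\<close> \<open>hd P \<in> set c\<close> set_arc[OF assms(1)]
      by (metis (no_types, lifting) mem_Collect_eq nth_mem)
    show "clen c (hd P) (P ! i) = clen c (hd P) (arc c (hd P) (last P) ! i)"
      using that clen_nth clen_nth_arc[OF assms(1) \<open>hd P \<in> set c\<close>]
        \<open>length (arc c (hd P) (last P)) = length P\<close> by (simp add: less_Suc_eq_le)
  qed
  ultimately show ?thesis by (simp add: nth_equalityI)
qed

lemma clen_enter_arc:
  assumes "distinct c" "s \<in> set c" "x \<in> set c - set (arc c s t)" "y \<in> set (arc c s t)"
  shows "clen c x y = clen c x s + clen c s y"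
proof (cases "clen c x s \<le> clen c x y")
  case True
  have "y \<in> set c" using assms(4) set_arc[OF assms(1,2)] by auto
  with True show ?thesis using clen_split[OF assms(1) _ assms(2)] assms(3) by blast
next
  case False
  have x: "x \<in> set c" "clen c s t < clen c s x"
    using assms(3) set_arc[OF assms(1,2)] by auto
  have y: "y \<in> set c" "clen c s y \<le> clen c s t"
    using assms(4) set_arc[OF assms(1,2)] by auto
  have "x \<noteq> s" using x by auto
  have "clen c x s = clen c x y + clen c y s"
    using clen_split[OF assms(1) x(1) y(1) assms(2)] False by simp
  moreover have "clen c s x + clen c x s = length c"
    using clen_cycle[OF assms(1,2) x(1)] \<open>x \<noteq> s\<close> by simp
  moreover have "y = s \<or> clen c s y + clen c y s = length c"
    using clen_cycle[OF assms(1,2) y(1)] by auto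
  ultimately show ?thesis using x(2) y(2) by auto
qed

lemma clen_leave_arc:
  assumes "distinct c" "s \<in> set c" "t \<in> set c" "y \<in> set (arc c s t)" "x \<in> set c - set (arc c s t)"
  shows "clen c y x = clen c y t + clen c t x"
proof -
  have x: "x \<in> set c" "clen c s t < clen c s x"
    using assms(5) set_arc[OF assms(1,2)] by auto
  have y: "y \<in> set c" "clen c s y \<le> clen c s t"
    using assms(4) set_arc[OF assms(1,2)] by auto
  have "clen c s t = clen c s y + clen c y t"
    using clen_split[OF assms(1,2) y(1) assms(3) y(2)] .
  moreover have "clen c s x = clen c s t + clen c t x"
    using clen_split[OF assms(1,2,3) x(1)] x(2) by simp
  moreover have "clen c s x = clen c s y + clen c y x"
    using clen_split[OF assms(1,2) y(1) x(1)] x(2) y(2) by simp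
  ultimately show ?thesis by linarith
qed

lemma clen_around_arc:
  assumes "distinct c" "s \<in> set c" "t \<in> set c" "x \<in> set c - set (arc c s t)"
  shows "clen c t x + clen c x s + clen c s t = length c"
proof -
  have x: "x \<in> set c" "clen c s t < clen c s x"
    using assms(4) set_arc[OF assms(1,2)] by auto
  then have "x \<noteq> s" by auto
  have "clen c s x = clen c s t + clen c t x"
    using clen_split[OF assms(1,2,3) x(1)] x(2) by simp
  moreover have "clen c s x + clen c x s = length c"
    using clen_cycle[OF assms(1,2) x(1)] \<open>x \<noteq> s\<close> by simp
  ultimately show ?thesis by linarith
qed

lemma arc_to_start_inter_arc:
  assumes "distinct c" "s \<in> set c" "z \<in> set c - set (arc c s t)"
  shows "set (arc c z s) \<inter> set (arc c s t) \<subseteq> {s}"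
proof
  fix x assume x: "x \<in> set (arc c z s) \<inter> set (arc c s t)"
  then have "x \<in> set c" "clen c z x \<le> clen c z s"
    using set_arc[OF assms(1)] assms(3) by auto
  moreover have "clen c z x = clen c z s + clen c s x"
    using clen_enter_arc[OF assms] x by blast
  ultimately show "x \<in> {s}"
    using clen_eq_0_iff[OF assms(1,2)] by simp
qed

lemma arc_from_end_inter_arc:
  assumes "distinct c" "s \<in> set c" "t \<in> set c" "z \<in> set c - set (arc c s t)"
  shows "set (arc c t z) \<inter> set (arc c s t) \<subseteq> {t}"
proof
  fix x assume x: "x \<in> set (arc c t z) \<inter> set (arc c s t)"
  then have "x \<in> set c" "clen c t x \<le> clen c t z"
    using set_arc[OF assms(1,3)] by auto
  show "x \<in> {t}"
  proof (rule ccontr)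
    assume "x \<notin> {t}"
    have "clen c x z = clen c x t + clen c t z"
      using clen_leave_arc[OF assms(1-3) _ assms(4)] x by blast
    moreover have "clen c t z = clen c t x + clen c x z"
      using clen_split[OF assms(1,3) \<open>x \<in> set c\<close>] assms(4) \<open>clen c t x \<le> clen c t z\<close> by blast
    moreover have "clen c t x + clen c x t = length c" "length c > 0"
      using clen_cycle[OF assms(1,3) \<open>x \<in> set c\<close>] \<open>x \<notin> {t}\<close> assms(3) by auto
    ultimately show False by linarith
  qed
qed

lemma arc_inter_opposite_arc:
  assumes "distinct c" "p \<in> set c" "q \<in> set c"
  shows "set (arc c p q) \<inter> set (arc c q p) \<subseteq> {p, q}"
proof
  fix x assume x: "x \<in> set (arc c p q) \<inter> set (arc c q p)"
  then have "x \<in> set c" "clen c p x \<le> clen c p q" "clen c q x \<le> clen c q p"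
    using set_arc[OF assms(1)] assms(2,3) by auto
  show "x \<in> {p, q}"
  proof (rule ccontr)
    assume "x \<notin> {p, q}"
    then have "clen c p x \<noteq> 0"
      using clen_eq_0_iff[OF assms(1,2) \<open>x \<in> set c\<close>] by auto
    then have "p \<noteq> q" using \<open>clen c p x \<le> clen c p q\<close> by auto
    have "clen c p q = clen c p x + clen c x q"
      using clen_split[OF assms(1,2) \<open>x \<in> set c\<close> assms(3)] \<open>clen c p x \<le> clen c p q\<close> .
    moreover have "clen c q x + clen c x q = length c" "clen c p q + clen c q p = length c"
      using clen_cycle[OF assms(1)] assms(2,3) \<open>x \<in> set c\<close> \<open>x \<notin> {p, q}\<close> \<open>p \<noteq> q\<close> by auto
    ultimately show False
      using \<open>clen c q x \<le> clen c q p\<close> \<open>clen c p x \<noteq> 0\<close> by linarith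
  qed
qed

lemma dpath_append:
  assumes "dpath E P" "dpath E Q" "last P = hd Q" "set P \<inter> set Q \<subseteq> {hd Q}"
  shows "dpath E (P @ tl Q)" "hd (P @ tl Q) = hd P" "last (P @ tl Q) = last Q"
    "set (P @ tl Q) = set P \<union> set Q" "plen (P @ tl Q) = plen P + plen Q"
proof -
  have "P \<noteq> []" "distinct P" "Q \<noteq> []" "distinct Q"
    using assms(1,2) by (auto simp: dpath_def)
  then obtain q qs where Q: "Q = q # qs" by (cases Q) auto
  show "hd (P @ tl Q) = hd P" using \<open>P \<noteq> []\<close> by simp
  show "last (P @ tl Q) = last Q" using Q assms(3) \<open>P \<noteq> []\<close> by (cases qs) auto
  show "set (P @ tl Q) = set P \<union> set Q" using Q assms(3) last_in_set[OF \<open>P \<noteq> []\<close>] by auto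
  show "plen (P @ tl Q) = plen P + plen Q" using Q \<open>P \<noteq> []\<close> by (cases P) (auto simp: plen_def)
  have "((P @ tl Q) ! i, (P @ tl Q) ! Suc i) \<in> E" if i: "Suc i < length (P @ tl Q)" for i
  proof -
    consider "Suc i < length P" | "Suc i = length P" | "Suc i > length P" by linarith
    then show ?thesis
    proof cases
      case 1
      then show ?thesis using assms(1) by (simp add: nth_append dpath_def)
    next
      case 2
      then have "i = length P - 1" by simp
      then have "(P @ tl Q) ! i = Q ! 0" "(P @ tl Q) ! Suc i = Q ! 1" "Suc 0 < length Q"
        using i 2 Q assms(3) \<open>P \<noteq> []\<close> by (auto simp: nth_append last_conv_nth)
      then show ?thesis using assms(2) by (auto simp: dpath_def)
    next
      case 3
      then have "(P @ tl Q) ! i = Q ! (i - length P + 1)"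
          "(P @ tl Q) ! Suc i = Q ! Suc (i - length P + 1)" "Suc (i - length P + 1) < length Q"
        using i Q by (auto simp: nth_append Suc_diff_le)
      then show ?thesis using assms(2) by (auto simp: dpath_def)
    qed
  qed
  moreover have "distinct (P @ tl Q)"
    using \<open>distinct P\<close> \<open>distinct Q\<close> Q assms(4) by auto
  ultimately show "dpath E (P @ tl Q)"
    using \<open>P \<noteq> []\<close> by (simp add: dpath_def)
qed

text \<open>The subdivision consists of C[p,q] and Q from p to q and of C[q,p] back to p.\<close>
lemma has_B_subdivision_ear:
  assumes C: "dcycle V E C" "p \<in> set C" "q \<in> set C" "p \<noteq> q"
    and Q: "dpath E Q" "hd Q = p" "last Q = q" "set Q \<inter> set C \<subseteq> {p, q}" "\<not> set Q \<subseteq> set C"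
    and long: "k \<le> clen C q p" "k \<le> clen C p q \<or> k \<le> plen Q"
  shows "has_B_subdivision E k 1 k"
proof -
  have "distinct C" using C(1) by (simp add: dcycle_def)
  let ?S = "arc C p q" and ?R = "arc C q p"
  have S: "dpath E ?S" "hd ?S = p" "last ?S = q" "set ?S \<subseteq> set C" "1 \<le> plen ?S"
    using dpath_arc[OF C(1,2)] hd_arc last_arc set_arc[OF \<open>distinct C\<close> C(2)]
      clen_eq_0_iff[OF \<open>distinct C\<close> C(2,3)] \<open>distinct C\<close> C(2-4)
    by auto
  have R: "dpath E ?R" "hd ?R = q" "last ?R = p" "set ?R \<subseteq> set C"
    using dpath_arc[OF C(1,3)] hd_arc last_arc set_arc[OF \<open>distinct C\<close> C(3)]
      \<open>distinct C\<close> C(2,3) by auto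
  have "1 \<le> plen Q"
    using Q(1-3) C(4) by (cases Q) (auto simp: dpath_def plen_def Suc_le_eq split: if_splits)
  have "set ?S \<inter> set ?R \<subseteq> {p, q}"
    using arc_inter_opposite_arc[OF \<open>distinct C\<close> C(2,3)] .
  moreover have "set ?S \<inter> set Q \<subseteq> {p, q}" "set Q \<inter> set ?R \<subseteq> {p, q}" "?S \<noteq> Q"
    using Q(4,5) S(4) R(4) by auto
  ultimately show ?thesis
    using long S R Q(1-3) C(4) \<open>1 \<le> plen Q\<close> unfolding has_B_subdivision_def
    by (metis Int_commute plen_arc)
qed

locale suitable_triangle =
  fixes V :: "'a set" and E :: "('a \<times> 'a) set" and k :: nat
    and C1 C2 C3 P12 P13 P23 :: "'a list"
  assumes no_B: "\<not> has_B_subdivision E k 1 k"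
    and cycles: "dcycle V E C1" "dcycle V E C2" "dcycle V E C3"
    and long: "8 * k \<le> length C1" "8 * k \<le> length C2" "8 * k \<le> length C3"
    and P12: "csubpath C1 P12" "csubpath C2 P12" "set P12 = set C1 \<inter> set C2" "length P12 \<le> k"
    and P13: "csubpath C1 P13" "csubpath C3 P13" "set P13 = set C1 \<inter> set C3" "length P13 \<le> k"
    and P23: "csubpath C2 P23" "csubpath C3 P23" "set P23 = set C2 \<inter> set C3" "length P23 \<le> k"
begin

abbreviation "s12 \<equiv> hd P12"
abbreviation "t12 \<equiv> last P12"
abbreviation "s13 \<equiv> hd P13"
abbreviation "t13 \<equiv> last P13"
abbreviation "s23 \<equiv> hd P23"
abbreviation "t23 \<equiv> last P23"

lemma swap_C2_C3: "suitable_triangle V E k C1 C3 C2 P13 P12 P23"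
  using no_B cycles long P12 P13 P23 by unfold_locales auto

lemma cycles_distinct: "distinct C1" "distinct C2" "distinct C3"
  using cycles by (simp_all add: dcycle_def)

lemma common_paths_eq_arc:
  "P12 = arc C1 s12 t12" "P12 = arc C2 s12 t12"
  "P13 = arc C1 s13 t13" "P13 = arc C3 s13 t13"
  "P23 = arc C2 s23 t23" "P23 = arc C3 s23 t23"
proof -
  have "length P12 \<le> length C1" "length P12 \<le> length C2" "length P13 \<le> length C1"
    "length P13 \<le> length C3" "length P23 \<le> length C2" "length P23 \<le> length C3"
    using P12(4) P13(4) P23(4) long by linarith+
  then show "P12 = arc C1 s12 t12" "P12 = arc C2 s12 t12"
    "P13 = arc C1 s13 t13" "P13 = arc C3 s13 t13"
    "P23 = arc C2 s23 t23" "P23 = arc C3 s23 t23"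
    using csubpath_eq_arc cycles_distinct P12(1,2) P13(1,2) P23(1,2) by blast+
qed

lemma common_paths_not_Nil: "P12 \<noteq> []" "P13 \<noteq> []" "P23 \<noteq> []"
  using P12(1) P13(1) P23(1) by (simp_all add: csubpath_def)

lemma common_path_ends:
  "s12 \<in> set C1 \<inter> set C2" "t12 \<in> set C1 \<inter> set C2"
  "s13 \<in> set C1 \<inter> set C3" "t13 \<in> set C1 \<inter> set C3"
  "s23 \<in> set C2 \<inter> set C3" "t23 \<in> set C2 \<inter> set C3"
  using common_paths_not_Nil by (simp_all add: P12(3)[symmetric] P13(3)[symmetric] P23(3)[symmetric])

lemma common_paths_short:
  "clen C1 s12 t12 < k" "clen C2 s12 t12 < k" "clen C1 s13 t13 < k" "clen C3 s13 t13 < k"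
  "clen C2 s23 t23 < k" "clen C3 s23 t23 < k"
proof -
  have "plen P12 < k" "plen P13 < k" "plen P23 < k"
    using P12(4) P13(4) P23(4) common_paths_not_Nil[THEN plen_less_length] by linarith+
  then show "clen C1 s12 t12 < k" "clen C2 s12 t12 < k" "clen C1 s13 t13 < k" "clen C3 s13 t13 < k"
    "clen C2 s23 t23 < k" "clen C3 s23 t23 < k"
    using common_paths_eq_arc[THEN arg_cong[where f = plen]] by simp_all
qed

lemma set_common_arcs:
  "set (arc C1 s12 t12) = set C1 \<inter> set C2" "set (arc C2 s12 t12) = set C1 \<inter> set C2"
  "set (arc C1 s13 t13) = set C1 \<inter> set C3" "set (arc C3 s13 t13) = set C1 \<inter> set C3"
  "set (arc C2 s23 t23) = set C2 \<inter> set C3" "set (arc C3 s23 t23) = set C2 \<inter> set C3"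
  using common_paths_eq_arc P12(3) P13(3) P23(3) by simp_all

lemma clen_C2_C3_eq:
  assumes "x \<in> set C2 \<inter> set C3"
  shows "clen C2 s23 x = clen C3 s23 x"
proof (rule clen_eq_if_arc_eq[OF cycles_distinct(2,3)])
  show "s23 \<in> set C2" "s23 \<in> set C3" using common_path_ends(5) by auto
  show "arc C2 s23 t23 = arc C3 s23 t23" using common_paths_eq_arc(5,6) by simp
  show "x \<in> set (arc C2 s23 t23)" using set_common_arcs(5) assms by simp
qed

lemma shared_vertex_before:
  assumes "z \<in> set C1 \<inter> set C2 \<inter> set C3" "v \<in> set C2 \<inter> set C3 - set C1"
    and "clen C2 s23 z < clen C2 s23 v"
  shows "clen C2 t12 v < k"
proof -
  have "z \<in> set (arc C2 s23 t23)" "v \<in> set (arc C2 s23 t23)"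
    using assms(1,2) set_common_arcs(5) by auto
  then have "clen C2 s23 v \<le> clen C2 s23 t23"
    using set_arc[OF cycles_distinct(2)] common_path_ends(5) by auto
  moreover have "clen C2 s23 v = clen C2 s23 z + clen C2 z v"
    using clen_split[OF cycles_distinct(2)] common_path_ends(5) assms by auto
  moreover have "z \<in> set (arc C2 s12 t12)" "v \<in> set C2 - set (arc C2 s12 t12)"
    using set_common_arcs(2) assms(1,2) by auto
  then have "clen C2 z v = clen C2 z t12 + clen C2 t12 v"
    using clen_leave_arc[OF cycles_distinct(2)] common_path_ends(1,2) by blast
  ultimately show ?thesis using common_paths_short(5) by linarith
qed

lemma shared_vertex_after:
  assumes "z \<in> set C1 \<inter> set C2 \<inter> set C3" "v \<in> set C2 \<inter> set C3 - set C1"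
    and "clen C2 s23 v < clen C2 s23 z"
  shows "clen C2 v s12 < k"
proof -
  have "z \<in> set (arc C2 s23 t23)"
    using assms(1) set_common_arcs(5) by auto
  then have "clen C2 s23 z \<le> clen C2 s23 t23"
    using set_arc[OF cycles_distinct(2)] common_path_ends(5) by auto
  moreover have "clen C2 s23 z = clen C2 s23 v + clen C2 v z"
    using clen_split[OF cycles_distinct(2)] common_path_ends(5) assms by auto
  moreover have "v \<in> set C2 - set (arc C2 s12 t12)" "z \<in> set (arc C2 s12 t12)"
    using set_common_arcs(2) assms(1,2) by auto
  then have "clen C2 v z = clen C2 v s12 + clen C2 s12 z"
    using clen_enter_arc[OF cycles_distinct(2)] common_path_ends(1) by blast
  ultimately show ?thesis using common_paths_short(5) by linarith
qed

lemma shared_vertex_case: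
  assumes "z \<in> set C1 \<inter> set C2 \<inter> set C3" "v \<in> set C2 \<inter> set C3 - set C1"
  shows "(clen C2 t12 v < k \<and> clen C3 t13 v < k) \<or> (clen C2 v s12 < k \<and> clen C3 v s13 < k)"
proof -
  interpret swapped: suitable_triangle V E k C1 C3 C2 P13 P12 P23
    by (rule swap_C2_C3)
  have z: "z \<in> set C1 \<inter> set C3 \<inter> set C2" and v: "v \<in> set C3 \<inter> set C2 - set C1"
    using assms by auto
  have "clen C2 s23 z = clen C3 s23 z" "clen C2 s23 v = clen C3 s23 v"
    using clen_C2_C3_eq assms by auto
  then have "clen C2 s23 z < clen C2 s23 v \<Longrightarrow> clen C2 t12 v < k \<and> clen C3 t13 v < k"
    and "clen C2 s23 v < clen C2 s23 z \<Longrightarrow> clen C2 v s12 < k \<and> clen C3 v s13 < k"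
    using shared_vertex_before[OF assms] swapped.shared_vertex_before[OF z v]
      shared_vertex_after[OF assms] swapped.shared_vertex_after[OF z v] by simp_all
  moreover have "clen C2 s23 z \<noteq> clen C2 s23 v"
    using clen_inj[OF cycles_distinct(2)] common_path_ends(5) assms by blast
  ultimately show ?thesis by linarith
qed

lemma not_both_sides_short:
  assumes "v \<in> set C2 - set C1"
  shows "\<not> (clen C2 t12 v < 3 * k \<and> clen C2 v s12 < 3 * k)"
proof -
  have "v \<in> set C2 - set (arc C2 s12 t12)"
    using assms set_common_arcs(2) by auto
  then have "clen C2 t12 v + clen C2 v s12 + clen C2 s12 t12 = length C2"
    using clen_around_arc[OF cycles_distinct(2)] common_path_ends(1,2) by blast
  then show ?thesis using common_paths_short(2) long(2) by linarith
qed

lemma ear_path: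
  assumes "set C1 \<inter> set C2 \<inter> set C3 = {}"
  obtains Q where "dpath E Q" "hd Q = t12" "last Q = s23" "set Q \<inter> set C2 \<subseteq> {t12, s23}"
    "s13 \<in> set Q" "plen Q = clen C1 t12 s13 + clen C3 s13 s23"
proof -
  let ?Qa = "arc C1 t12 s13" and ?Qb = "arc C3 s13 s23"
  have t12: "t12 \<in> set C1 - set (arc C1 s13 t13)"
    and s13: "s13 \<in> set C1 - set (arc C1 s12 t12)" "s13 \<in> set C3 - set (arc C3 s23 t23)"
    using assms common_path_ends set_common_arcs by auto
  have "t12 \<in> set C1" "s13 \<in> set C1" "s13 \<in> set C3" "s23 \<in> set C3"
    using common_path_ends by auto
  then have Qa: "dpath E ?Qa" "hd ?Qa = t12" "last ?Qa = s13" "set ?Qa \<subseteq> set C1"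
    and Qb: "dpath E ?Qb" "hd ?Qb = s13" "last ?Qb = s23" "set ?Qb \<subseteq> set C3"
    using dpath_arc[OF cycles(1)] dpath_arc[OF cycles(3)]
      hd_arc[OF cycles_distinct(1)] last_arc[OF cycles_distinct(1)] set_arc[OF cycles_distinct(1)]
      hd_arc[OF cycles_distinct(3)] last_arc[OF cycles_distinct(3)] set_arc[OF cycles_distinct(3)]
    by auto
  have "set ?Qa \<inter> set (arc C1 s13 t13) \<subseteq> {s13}"
    using arc_to_start_inter_arc[OF cycles_distinct(1) _ t12] common_path_ends(3) by blast
  then have "set ?Qa \<inter> set ?Qb \<subseteq> {hd ?Qb}"
    using Qa(4) Qb(2,4) set_common_arcs(3) by auto
  note Q = dpath_append[OF Qa(1) Qb(1) _ this]
  have "set ?Qa \<inter> set (arc C1 s12 t12) \<subseteq> {t12}"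
    using arc_from_end_inter_arc[OF cycles_distinct(1) _ _ s13(1)] common_path_ends(1,2) by blast
  moreover have "set ?Qb \<inter> set (arc C3 s23 t23) \<subseteq> {s23}"
    using arc_to_start_inter_arc[OF cycles_distinct(3) _ s13(2)] common_path_ends(5) by blast
  ultimately have "set (?Qa @ tl ?Qb) \<inter> set C2 \<subseteq> {t12, s23}"
    using Q(4) Qa(3,4) Qb(2,4) set_common_arcs(1,6) by auto
  moreover have "s13 \<in> set ?Qb"
    using hd_in_set[OF arc_not_Nil, of C3 s13 s23] Qb(2) by simp
  ultimately show thesis
    using Q Qa Qb by (intro that[of "?Qa @ tl ?Qb"]) auto
qed

lemma ear_alternative:
  assumes "set C1 \<inter> set C2 \<inter> set C3 = {}"
  shows "clen C2 s23 t12 < k \<or> (clen C2 t12 s23 < k \<and> clen C3 s13 s23 < k)"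
proof (rule ccontr)
  obtain Q where Q: "dpath E Q" "hd Q = t12" "last Q = s23" "set Q \<inter> set C2 \<subseteq> {t12, s23}"
    "s13 \<in> set Q" "plen Q = clen C1 t12 s13 + clen C3 s13 s23"
    using ear_path[OF assms] by blast
  assume "\<not> ?thesis"
  then have "k \<le> clen C2 s23 t12" "k \<le> clen C2 t12 s23 \<or> k \<le> plen Q"
    using Q(6) by auto
  moreover have "\<not> set Q \<subseteq> set C2" "t12 \<in> set C2" "s23 \<in> set C2" "t12 \<noteq> s23"
    using Q(5) assms common_path_ends by auto
  ultimately have "has_B_subdivision E k 1 k"
    using has_B_subdivision_ear[OF cycles(2) _ _ _ Q(1-4)] by blast
  with no_B show False ..
qed

lemma short_C2_arc_bound:
  assumes "set C1 \<inter> set C2 \<inter> set C3 = {}" "v \<in> set C2 \<inter> set C3"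
    and "clen C2 s23 t12 < k"
  shows "clen C2 v s12 < k"
proof -
  have v: "v \<in> set (arc C2 s23 t23)" and s12: "s12 \<in> set C2 - set (arc C2 s23 t23)"
    and s23: "s23 \<in> set C2 - set (arc C2 s12 t12)" and t12: "t12 \<in> set (arc C2 s12 t12)"
    using assms common_path_ends set_common_arcs by auto
  have "clen C2 s23 v \<le> clen C2 s23 s12"
    using v s12 set_arc[OF cycles_distinct(2)] common_path_ends(5) by auto
  then have "clen C2 s23 s12 = clen C2 s23 v + clen C2 v s12"
    using clen_split[OF cycles_distinct(2)] v s12 common_path_ends(5) set_common_arcs(5) by auto
  moreover have "clen C2 s23 t12 = clen C2 s23 s12 + clen C2 s12 t12"
    using clen_enter_arc[OF cycles_distinct(2) _ s23 t12] common_path_ends(1) by blast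
  ultimately show ?thesis
    using assms(3) by linarith
qed

lemma short_ear_bound:
  assumes "set C1 \<inter> set C2 \<inter> set C3 = {}" "v \<in> set C2 \<inter> set C3"
    and "clen C2 t12 s23 < k" "clen C3 s13 s23 < k"
  shows "clen C2 t12 v < 2 * k \<and> clen C3 t13 v < 2 * k"
proof -
  have v: "v \<in> set (arc C2 s23 t23)" "v \<in> set (arc C3 s23 t23)"
    "v \<in> set C3 - set (arc C3 s13 t13)"
    and t12: "t12 \<in> set C2 - set (arc C2 s23 t23)"
    and s13: "s13 \<in> set C3 - set (arc C3 s23 t23)" "s13 \<in> set (arc C3 s13 t13)"
    using assms common_path_ends set_common_arcs by auto
  have "clen C2 s23 v \<le> clen C2 s23 t23"
    using v(1) set_arc[OF cycles_distinct(2)] common_path_ends(5) by auto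
  moreover have "clen C2 t12 v = clen C2 t12 s23 + clen C2 s23 v"
    using clen_enter_arc[OF cycles_distinct(2) _ t12 v(1)] common_path_ends(5) by blast
  moreover have "clen C3 s23 v \<le> clen C3 s23 t23"
    using v(2) set_arc[OF cycles_distinct(3)] common_path_ends(5) by auto
  moreover have "clen C3 s13 v = clen C3 s13 s23 + clen C3 s23 v"
    using clen_enter_arc[OF cycles_distinct(3) _ s13(1) v(2)] common_path_ends(5) by blast
  moreover have "clen C3 s13 v = clen C3 s13 t13 + clen C3 t13 v"
    using clen_leave_arc[OF cycles_distinct(3) _ _ s13(2) v(3)] common_path_ends(3,4) by blast
  ultimately show ?thesis
    using assms(3,4) common_paths_short(5,6) by linarith
qed

lemma ear_bound:
  assumes "set C1 \<inter> set C2 \<inter> set C3 = {}" "v \<in> set C2 \<inter> set C3"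
  shows "clen C2 v s12 < k \<or> (clen C2 t12 v < 2 * k \<and> clen C3 t13 v < 2 * k)"
  using ear_alternative[OF assms(1)] short_C2_arc_bound[OF assms] short_ear_bound[OF assms] by blast

lemma one_side_short:
  assumes "v \<in> set C2 \<inter> set C3 - set C1"
  shows "(clen C2 t12 v < 3 * k \<and> clen C3 t13 v < 3 * k) \<or>
    (clen C2 v s12 < 3 * k \<and> clen C3 v s13 < 3 * k)"
proof (cases "set C1 \<inter> set C2 \<inter> set C3 = {}")
  case True
  interpret swapped: suitable_triangle V E k C1 C3 C2 P13 P12 P23
    by (rule swap_C2_C3)
  have "set C1 \<inter> set C3 \<inter> set C2 = {}" "v \<in> set C3 \<inter> set C2"
    using True assms by auto
  then show ?thesis
    using ear_bound[OF True] swapped.ear_bound assms by fastforce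
next
  case False
  then obtain z where "z \<in> set C1 \<inter> set C2 \<inter> set C3" by blast
  then show ?thesis
    using shared_vertex_case assms by fastforce
qed

end

lemma k_suitable_common_path_length:
  assumes "k_suitable V E k CC" "C \<in> CC" "C' \<in> CC" "C \<noteq> C'"
    and "csubpath C P" "set P = set C \<inter> set C'"
  shows "length P \<le> k"
proof -
  have "distinct P" "set C \<inter> set C' \<noteq> {}"
    using assms(5,6) by (auto simp: csubpath_def)
  then obtain R where "csubpath C R" "set R = set C \<inter> set C'" "length R \<le> k"
    using assms(1-4) unfolding k_suitable_def by blast
  with \<open>distinct P\<close> show ?thesis
    using assms(6) by (metis csubpath_def distinct_card)
qed

theorem mainTheorem12:
  fixes V :: "'a set" and E :: "('a \<times> 'a) set" and k :: nat and CC :: "'a list set"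
    and C1 C2 C3 P12 P13 :: "'a list" and v :: 'a
  assumes "k > 0"
    and "digraph V E"
    and "\<not> has_B_subdivision E k 1 k"
    and "k_suitable V E k CC"
    and "C1 \<in> CC" "C2 \<in> CC" "C3 \<in> CC"
    and "C1 \<noteq> C2" "C1 \<noteq> C3" "C2 \<noteq> C3"
    and "set C1 \<inter> set C2 \<noteq> {}" "set C1 \<inter> set C3 \<noteq> {}" "set C2 \<inter> set C3 \<noteq> {}"
    and "v \<in> (set C2 \<inter> set C3) - set C1"
    and "csubpath C1 P12" "csubpath C2 P12" "set P12 = set C1 \<inter> set C2"
    and "csubpath C1 P13" "csubpath C3 P13" "set P13 = set C1 \<inter> set C3"
  shows "(clen C2 (last P12) v < 3 * k \<and> clen C3 (last P13) v < 3 * k) \<noteq>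
         (clen C2 v (hd P12) < 3 * k \<and> clen C3 v (hd P13) < 3 * k)"
proof -
  obtain P23 where P23: "csubpath C2 P23" "csubpath C3 P23" "set P23 = set C2 \<inter> set C3"
    "length P23 \<le> k"
    using assms(4,6,7,10,13) unfolding k_suitable_def by blast
  have "length P12 \<le> k" "length P13 \<le> k"
    using k_suitable_common_path_length[OF assms(4)] assms(5-9,15,17,18,20) by blast+
  moreover have "dcycle V E C \<and> 8 * k \<le> length C" if "C \<in> CC" for C
    using assms(4) that unfolding k_suitable_def by blast
  ultimately interpret suitable_triangle V E k C1 C2 C3 P12 P13 P23
    using assms(3,5-7,15-20) P23 by unfold_locales auto
  show ?thesis
    using one_side_short[OF assms(14)] not_both_sides_short assms(14) by auto
qed

end
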